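(* Let $G$ be a group and let $V$ be a finite-dimensional vector space. Suppose that $\tau\in\mathrm{LNUCA}_c(G,V)$ is left-invertible. Then $\tau$ is stably injective.
   Context: For $g\in G$ and $x\in V^G$, $(gx)(h)=x(g^{-1}h)$. For $M\subset G$, a set $S$ of maps $V^M\to V$ and $s\in S^G$, the NUCA $\sigma_s\colon V^G\to V^G$ is $\sigma_s(x)(g)=s(g)((g^{-1}x)\vert_M)$; it has finite memory if $M$ is finite. $\mathrm{LNUCA}_c(G,V)$ is the set of $\sigma_s$ with $M$ finite, $s\in\mathcal{L}(V^M,V)^G$ constant outside some finite subset of $G$. $\tau$ is left-invertible if there is a NUCA $\sigma\colon V^G\to V^G$ with finite memory such that $\sigma\circ\tau=\mathrm{Id}$. For $s\in S^G$, $\Sigma(s)$ is the closure of $\{gs:g\in G\}$ in $S^G$ (prodiscrete topology); $\tau=\sigma_s$ is stably injective if $\sigma_p$ is injective for every $p\in\Sigma(s)$. *)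

theory Defs
  imports Main "HOL.Vector_Spaces"
begin

text \<open>Groups are modelled by the type class group_add (written additively:
  the product g h is g + h, the inverse of g is - g).  A map V^M -> V is represented by a function
  f :: ('g => 'v) => 'v that only depends on the values on M
  (f u = f (restr M u)), so that such f correspond bijectively to maps V^M -> V.\<close>

definition restr :: "'g set \<Rightarrow> ('g \<Rightarrow> 'v::zero) \<Rightarrow> 'g \<Rightarrow> 'v" where
  "restr M u = (\<lambda>h. if h \<in> M then u h else 0)"

definition shift :: "'g::group_add \<Rightarrow> ('g \<Rightarrow> 'a) \<Rightarrow> 'g \<Rightarrow> 'a" where
  "shift g x = (\<lambda>h. x (- g + h))"

definition local_rule :: "'g set \<Rightarrow> (('g \<Rightarrow> 'v::zero) \<Rightarrow> 'v) \<Rightarrow> bool" where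
  "local_rule M f \<longleftrightarrow> (\<forall>u. f u = f (restr M u))"

definition linear_rule ::
  "('k \<Rightarrow> 'v \<Rightarrow> 'v) \<Rightarrow> 'g set \<Rightarrow> (('g \<Rightarrow> 'v::ab_group_add) \<Rightarrow> 'v) \<Rightarrow> bool" where
  "linear_rule scale M f \<longleftrightarrow> local_rule M f
     \<and> (\<forall>u w. f (\<lambda>h. u h + w h) = f u + f w)
     \<and> (\<forall>c u. f (\<lambda>h. scale c (u h)) = scale c (f u))"

definition nuca :: "'g::group_add set \<Rightarrow> ('g \<Rightarrow> ('g \<Rightarrow> 'v::zero) \<Rightarrow> 'v)
    \<Rightarrow> ('g \<Rightarrow> 'v) \<Rightarrow> 'g \<Rightarrow> 'v" where
  "nuca M s x = (\<lambda>g. s g (restr M (shift (- g) x)))"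

text \<open>Sigma(s): closure of the orbit {g s} in the prodiscrete topology, i.e.
  p is in it iff every finite window of p agrees with some translate g s.\<close>
definition orbit_closure :: "('g::group_add \<Rightarrow> 'a) \<Rightarrow> ('g \<Rightarrow> 'a) set" where
  "orbit_closure s = {p. \<forall>F. finite F \<longrightarrow> (\<exists>g. \<forall>h\<in>F. p h = shift g s h)}"

definition stably_injective :: "'g::group_add set \<Rightarrow> ('g \<Rightarrow> ('g \<Rightarrow> 'v::zero) \<Rightarrow> 'v) \<Rightarrow> bool" where
  "stably_injective M s \<longleftrightarrow> (\<forall>p\<in>orbit_closure s. inj (nuca M p))"

definition left_invertible :: "(('g::group_add \<Rightarrow> 'v::zero) \<Rightarrow> ('g \<Rightarrow> 'v)) \<Rightarrow> bool" where
  "left_invertible \<tau> \<longleftrightarrow> (\<exists>M' (s' :: 'g \<Rightarrow> ('g \<Rightarrow> 'v) \<Rightarrow> 'v).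
      finite M' \<and> (\<forall>g. local_rule M' (s' g)) \<and> nuca M' s' \<circ> \<tau> = id)"

definition LNUCA_c_rule :: "('k \<Rightarrow> 'v \<Rightarrow> 'v) \<Rightarrow> 'g set \<Rightarrow> ('g \<Rightarrow> ('g \<Rightarrow> 'v::ab_group_add) \<Rightarrow> 'v) \<Rightarrow> bool" where
  "LNUCA_c_rule scale M s \<longleftrightarrow> finite M \<and> (\<forall>g. linear_rule scale M (s g))
     \<and> (\<exists>E. finite E \<and> (\<forall>g h. g \<notin> E \<longrightarrow> h \<notin> E \<longrightarrow> s g = s h))"

end

theory Submission
  imports Defs
begin

text \<open>A configuration p in the orbit closure of a rule s that is constant, equal to c,
  outside a finite set E is either a translate of s or, when G is infinite, the constant
  configuration c.  Translates of s give conjugates of the injective map sigma_s.  For the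
  cellular automaton tau_c with constant rule c, pick a cell k whose memory window k + M'
  of the left inverse avoids E: there sigma_s and tau_c agree, so the left inverse recovers
  x k from tau_c x; by shift equivariance of tau_c every other cell is recovered as well.\<close>

lemma shift_shift: "shift a (shift b x) = shift (a + b) x"
  by (rule ext) (simp add: shift_def minus_add add.assoc[symmetric])

lemma shift_0 [simp]: "shift 0 x = x"
  by (rule ext) (simp add: shift_def)

lemma shift_minus_shift [simp]: "shift (- a) (shift a x) = x"
  by (simp add: shift_shift)

lemma inj_shift: "inj (shift a)"
  by (metis injI shift_minus_shift)

lemma shift_const [simp]: "shift g (\<lambda>_. c) = (\<lambda>_. c)"
  by (simp add: shift_def)

lemma nuca_shift_rule: "nuca M (shift g s) x = shift g (nuca M s (shift (- g) x))"
proof (rule ext)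
  fix k
  have "shift (- (- g + k)) (shift (- g) x) = shift (- k) x"
    by (rule ext) (simp add: shift_def add.assoc)
  then show "nuca M (shift g s) x k = shift g (nuca M s (shift (- g) x)) k"
    by (simp add: nuca_def shift_def)
qed

lemma nuca_const_shift: "nuca M (\<lambda>_. c) (shift a x) = shift a (nuca M (\<lambda>_. c) x)"
  using nuca_shift_rule[of M a "\<lambda>_. c" "shift a x"] by simp

lemma nuca_cong_window:
  assumes "\<And>m. m \<in> M \<Longrightarrow> z (k + m) = w (k + m)"
  shows "nuca M s z k = nuca M s w k"
proof -
  have "restr M (shift (- k) z) = restr M (shift (- k) w)"
    using assms by (auto simp: restr_def shift_def)
  then show ?thesis by (simp add: nuca_def)
qed

lemma nuca_eq_const_rule_outside:
  assumes "g \<notin> E" and "\<And>h. h \<notin> E \<Longrightarrow> s h = c"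
  shows "nuca M s x g = nuca M (\<lambda>_. c) x g"
  using assms by (simp add: nuca_def)

lemma inj_nuca_shift_rule:
  assumes "inj (nuca M s)"
  shows "inj (nuca M (shift g s))"
proof -
  have "nuca M (shift g s) = shift g \<circ> nuca M s \<circ> shift (- g)"
    by (simp add: fun_eq_iff nuca_shift_rule)
  then show ?thesis
    using assms inj_shift by (metis inj_compose)
qed

lemma inj_nuca_const_rule_if_cell_determined:
  assumes "\<And>x y. nuca M (\<lambda>_. c) x = nuca M (\<lambda>_. c) y \<Longrightarrow> x k = y k"
  shows "inj (nuca M (\<lambda>_. c))"
proof (rule injI, rule ext)
  fix x y k0
  assume "nuca M (\<lambda>_. c) x = nuca M (\<lambda>_. c) y"
  then have "nuca M (\<lambda>_. c) (shift (k - k0) x) = nuca M (\<lambda>_. c) (shift (k - k0) y)"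
    by (simp add: nuca_const_shift)
  then have "shift (k - k0) x k = shift (k - k0) y k"
    by (rule assms)
  then show "x k0 = y k0"
    by (simp add: shift_def minus_diff_eq)
qed

lemma ex_translate_avoiding:
  fixes E M :: "'g::group_add set"
  assumes "infinite (UNIV :: 'g set)" and "finite E" and "finite M"
  shows "\<exists>k. \<forall>m \<in> M. k + m \<notin> E"
proof -
  have "finite ((\<lambda>(e, m). e - m) ` (E \<times> M))"
    using assms by simp
  then obtain k where k: "k \<notin> (\<lambda>(e, m). e - m) ` (E \<times> M)"
    using ex_new_if_finite[OF assms(1)] by blast
  have "k + m \<notin> E" if "m \<in> M" for m
  proof
    assume "k + m \<in> E"
    then have "(k + m) - m \<in> (\<lambda>(e, m). e - m) ` (E \<times> M)"
      using that by force
    with k show False by simp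
  qed
  then show ?thesis by blast
qed

lemma inj_nuca_const_rule_if_perturbation_left_invertible:
  fixes s :: "'g::group_add \<Rightarrow> ('g \<Rightarrow> 'v::zero) \<Rightarrow> 'v"
  assumes "infinite (UNIV :: 'g set)" and "finite E" and "finite M'"
    and s_const: "\<And>h. h \<notin> E \<Longrightarrow> s h = c"
    and left_inv: "\<And>x. nuca M' s' (nuca M s x) = x"
  shows "inj (nuca M (\<lambda>_. c))"
proof -
  obtain k where k: "\<And>m. m \<in> M' \<Longrightarrow> k + m \<notin> E"
    using ex_translate_avoiding[OF assms(1-3)] by blast
  show ?thesis
  proof (rule inj_nuca_const_rule_if_cell_determined)
    fix x y
    assume eq: "nuca M (\<lambda>_. c) x = nuca M (\<lambda>_. c) y"
    have "nuca M s x (k + m) = nuca M s y (k + m)" if "m \<in> M'" for m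
    proof -
      have "nuca M s x (k + m) = nuca M (\<lambda>_. c) x (k + m)"
        using k[OF that] s_const by (rule nuca_eq_const_rule_outside)
      also have "\<dots> = nuca M (\<lambda>_. c) y (k + m)"
        by (simp add: eq)
      also have "\<dots> = nuca M s y (k + m)"
        using k[OF that] s_const by (rule nuca_eq_const_rule_outside[symmetric])
      finally show ?thesis .
    qed
    then have "nuca M' s' (nuca M s x) k = nuca M' s' (nuca M s y) k"
      by (rule nuca_cong_window)
    then show "x k = y k"
      by (simp add: left_inv)
  qed
qed

lemma orbit_closure_eventually_const_cases:
  fixes s :: "'g::group_add \<Rightarrow> 'a"
  assumes p: "p \<in> orbit_closure s" and "finite E"
    and s_const: "\<And>g h. g \<notin> E \<Longrightarrow> h \<notin> E \<Longrightarrow> s g = s h"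
  obtains g where "p = shift g s"
    | g where "infinite (UNIV :: 'g set)" and "g \<notin> E" and "p = (\<lambda>_. s g)"
proof (cases "finite (UNIV :: 'g set)")
  case True
  then obtain g where "\<forall>h \<in> UNIV. p h = shift g s h"
    using p unfolding orbit_closure_def by blast
  then have "p = shift g s"
    by (simp add: fun_eq_iff)
  then show ?thesis by (rule that(1))
next
  case infinite: False
  obtain g0 where g0: "g0 \<notin> E"
    using ex_new_if_finite[OF infinite \<open>finite E\<close>] by blast
  show ?thesis
  proof (cases "p = (\<lambda>_. s g0)")
    case True
    then show ?thesis by (rule that(2)[OF infinite g0])
  next
    case False
    then obtain h0 where h0: "p h0 \<noteq> s g0" by auto
    define C where "C = (\<lambda>e. h0 - e) ` E"
    have C: "g \<in> C" if "p h0 = shift g s h0" for g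
    proof -
      have "s (- g + h0) \<noteq> s g0"
        using that h0 by (simp add: shift_def)
      then have "- g + h0 \<in> E"
        using s_const g0 by blast
      moreover have "g = h0 - (- g + h0)"
        by (simp add: diff_add_eq_diff_diff_swap)
      ultimately show ?thesis unfolding C_def by blast
    qed
    have "\<exists>g. p = shift g s"
    proof (rule ccontr)
      assume "\<nexists>g. p = shift g s"
      then have "\<forall>g. \<exists>h. p h \<noteq> shift g s h"
        by (auto simp: fun_eq_iff)
      then obtain witness where witness: "\<And>g. p (witness g) \<noteq> shift g s (witness g)"
        by metis
      have "finite (insert h0 (witness ` C))"
        using \<open>finite E\<close> by (simp add: C_def)
      then obtain g where g: "\<forall>h \<in> insert h0 (witness ` C). p h = shift g s h"
        using p unfolding orbit_closure_def by blast
      then have "g \<in> C"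
        using C by simp
      with g witness show False by blast
    qed
    then show ?thesis using that(1) by blast
  qed
qed

lemma stably_injective_if_left_invertible_eventually_const:
  fixes s :: "'g::group_add \<Rightarrow> ('g \<Rightarrow> 'v::zero) \<Rightarrow> 'v"
  assumes "finite E" and s_const: "\<And>g h. g \<notin> E \<Longrightarrow> h \<notin> E \<Longrightarrow> s g = s h"
    and "left_invertible (nuca M s)"
  shows "stably_injective M s"
proof -
  obtain M' and s' :: "'g \<Rightarrow> ('g \<Rightarrow> 'v) \<Rightarrow> 'v"
    where "finite M'" and left_inv: "nuca M' s' \<circ> nuca M s = id"
    using assms(3) unfolding left_invertible_def by blast
  have left_inv_at: "nuca M' s' (nuca M s x) = x" for x
    using fun_cong[OF left_inv] by simp
  have "inj (nuca M s)"
    using left_inv by (metis inj_on_id inj_on_imageI2)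
  show ?thesis
    unfolding stably_injective_def
  proof
    fix p
    assume "p \<in> orbit_closure s"
    then show "inj (nuca M p)"
    proof (rule orbit_closure_eventually_const_cases[OF _ \<open>finite E\<close> s_const])
      fix g
      assume "p = shift g s"
      then show ?thesis using \<open>inj (nuca M s)\<close> by (simp add: inj_nuca_shift_rule)
    next
      fix g
      assume "infinite (UNIV :: 'g set)" and "g \<notin> E" and "p = (\<lambda>_. s g)"
      have s_eq: "s h = s g" if "h \<notin> E" for h
        using s_const that \<open>g \<notin> E\<close> .
      from \<open>infinite (UNIV :: 'g set)\<close> \<open>finite E\<close> \<open>finite M'\<close> s_eq left_inv_at
      show ?thesis
        unfolding \<open>p = (\<lambda>_. s g)\<close>
        by (rule inj_nuca_const_rule_if_perturbation_left_invertible)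
    qed
  qed
qed

theorem theorem4p3:
  fixes scale :: "'k::field \<Rightarrow> 'v::ab_group_add \<Rightarrow> 'v"
    and B :: "'v set"
    and M :: "'g::group_add set"
    and s :: "'g \<Rightarrow> ('g \<Rightarrow> 'v) \<Rightarrow> 'v"
  assumes "finite_dimensional_vector_space scale B"
    and "LNUCA_c_rule scale M s"
    and "left_invertible (nuca M s)"
  shows "stably_injective M s"
proof -
  obtain E where "finite E" and "\<And>g h. g \<notin> E \<Longrightarrow> h \<notin> E \<Longrightarrow> s g = s h"
    using assms(2) unfolding LNUCA_c_rule_def by blast
  then show ?thesis
    using assms(3) by (rule stably_injective_if_left_invertible_eventually_const)
qed

end
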